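(* For non-negative integers $p_1,p_2$, a positive integer $r$, integers $k_1,k_2$ and $x_1,x_2\in\mathbb{C}$, $$\sum_{j_1=0}^{p_1}\sum_{j_2=0}^{p_2}\binom{p_1}{j_1}\binom{p_2}{j_2}\left(B^{(k_1)}_{p_1-j_1}(x_1+r)B^{(k_2)}_{p_2-j_2}(x_2+r)-B^{(k_1)}_{p_1-j_1}(x_1)B^{(k_2)}_{p_2-j_2}(x_2)\right)B_{j_1+j_2}$$ $$=\sum_{j_1=0}^{p_1}\sum_{j_2=0}^{p_2}\binom{p_1}{j_1}\binom{p_2}{j_2}B^{(k_1)}_{p_1-j_1}(x_1)B^{(k_2)}_{p_2-j_2}(x_2)\left(B_{j_1+j_2}(r)-B_{j_1+j_2}\right)$$ $$=p_1\sum_{t=0}^{r-1}B^{(k_1)}_{p_1-1}(x_1+t)B^{(k_2)}_{p_2}(x_2+t)+p_2\sum_{t=0}^{r-1}B^{(k_1)}_{p_1}(x_1+t)B^{(k_2)}_{p_2-1}(x_2+t),$$ where the term with $p_i$ as factor is interpreted as $0$ when $p_i=0$.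
   Context: For an integer $k$, a non-negative integer $n$ and $x\in\mathbb{C}$, the poly-Bernoulli polynomial is $B_{n}^{(k)}(x)=\sum_{l=0}^{n}\frac{1}{(l+1)^{k}}\sum_{j=0}^{l}(-1)^{j}\binom{l}{j}(j+x)^{n}$. $B_n(x)$ are the Bernoulli polynomials, $\frac{te^{xt}}{e^t-1}=\sum_{n\ge0}B_n(x)\frac{t^n}{n!}$, and $B_n=B_n(0)$ the Bernoulli numbers (so $B_1=-1/2$). *)

theory Defs
  imports "HOL-Analysis.Analysis" "HOL-Computational_Algebra.Formal_Power_Series"
begin

definition bernpoly :: "nat \<Rightarrow> complex \<Rightarrow> complex" where
  "bernpoly n x = fact n * fps_nth (fps_X * fps_exp x / (fps_exp 1 - 1)) n"

definition bernoulli_num :: "nat \<Rightarrow> complex" where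
  "bernoulli_num n = bernpoly n 0"

definition poly_bernpoly :: "int \<Rightarrow> nat \<Rightarrow> complex \<Rightarrow> complex" where
  "poly_bernpoly k n x =
     (\<Sum>l=0..n. (1 / (of_nat (l+1)) powi k) *
        (\<Sum>j=0..l. (-1)^j * of_nat (l choose j) * (of_nat j + x)^n))"

end

theory Submission
  imports Defs
begin

text \<open>Both families are Appell sequences: P n (x + y) = \<Sum>i\<le>n. (n choose i) P (n-i) x y^i.
  For Appell sequences P, Q, R the double convolution
  \<Sum>\<Sum> (p1 choose j1)(p2 choose j2) P (p1-j1) x1 Q (p2-j2) x2 R (j1+j2) y
  does not change when y is moved from R into both P and Q; for R = bernpoly and y = r this gives
  the first identity. For the second, B_m(r) - B_m = \<Sum>t<r. m t^(m-1); splitting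
  (j1+j2) t^(j1+j2-1) by the product rule and resumming each factor with the Appell property
  turns the double sum into the two sums over t.\<close>

lemma sum_choose_Suc:
  fixes g :: "nat \<Rightarrow> 'a::comm_semiring_1"
  shows "(\<Sum>a\<le>Suc n. of_nat (Suc n choose a) * g a)
       = (\<Sum>a\<le>n. of_nat (n choose a) * g a) + (\<Sum>a\<le>n. of_nat (n choose a) * g (Suc a))"
proof -
  have "(\<Sum>a\<le>Suc n. of_nat (Suc n choose a) * g a)
      = g 0 + (\<Sum>i\<le>n. of_nat (n choose i) * g (Suc i)) + (\<Sum>i\<le>n. of_nat (n choose Suc i) * g (Suc i))"
    by (subst sum.atMost_Suc_shift) (simp add: distrib_right sum.distrib add.assoc)
  moreover have "g 0 + (\<Sum>i\<le>n. of_nat (n choose Suc i) * g (Suc i)) = (\<Sum>a\<le>Suc n. of_nat (n choose a) * g a)"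
    by (simp only: sum.atMost_Suc_shift[of _ n]) simp
  moreover have "(\<Sum>a\<le>Suc n. of_nat (n choose a) * g a) = (\<Sum>a\<le>n. of_nat (n choose a) * g a)"
    by (simp add: binomial_eq_0)
  ultimately show ?thesis
    by (metis (no_types, lifting) add.assoc add.commute)
qed

lemma vandermonde_sum:
  fixes f :: "nat \<Rightarrow> 'a::comm_semiring_1"
  shows "(\<Sum>a1\<le>j1. of_nat (j1 choose a1) * (\<Sum>a2\<le>j2. of_nat (j2 choose a2) * f (a1 + a2)))
       = (\<Sum>i\<le>j1 + j2. of_nat ((j1 + j2) choose i) * f i)"
proof (induction j1 arbitrary: f)
  case 0
  then show ?case by simp
next
  case (Suc j1)
  show ?case
    using Suc[of f] Suc[of "\<lambda>i. f (Suc i)"]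
    by (simp only: sum_choose_Suc add_Suc)
qed

lemma sum_triangle_swap:
  fixes G :: "nat \<Rightarrow> nat \<Rightarrow> 'a::comm_monoid_add"
  shows "(\<Sum>j\<le>p. \<Sum>a\<le>j. G a (j - a)) = (\<Sum>a\<le>p. \<Sum>m\<le>p - a. G a m)"
proof (induction p)
  case 0
  then show ?case by simp
next
  case (Suc p)
  have "(\<Sum>a\<le>Suc p. \<Sum>m\<le>Suc p - a. G a m) = (\<Sum>a\<le>p. \<Sum>m\<le>Suc p - a. G a m) + G (Suc p) 0"
    by simp
  also have "(\<Sum>a\<le>p. \<Sum>m\<le>Suc p - a. G a m) = (\<Sum>a\<le>p. (\<Sum>m\<le>p - a. G a m) + G a (Suc p - a))"
    by (intro sum.cong refl) (simp add: Suc_diff_le)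
  finally show ?case using Suc by (simp add: sum.distrib ac_simps)
qed

lemma of_nat_add_mult_power_pred:
  fixes t :: "'a::comm_semiring_1"
  shows "of_nat (j1 + j2) * t ^ (j1 + j2 - 1)
       = of_nat j1 * t ^ (j1 - 1) * t ^ j2 + t ^ j1 * (of_nat j2 * t ^ (j2 - 1))"
proof (cases "j1 = 0 \<or> j2 = 0")
  case True
  then show ?thesis by auto
next
  case False
  then have "t ^ (j1 + j2 - 1) = t ^ (j1 - 1) * t ^ j2" "t ^ (j1 + j2 - 1) = t ^ j1 * t ^ (j2 - 1)"
    by (simp_all flip: power_add)
  then show ?thesis
    by (metis (no_types, lifting) distrib_right mult.assoc mult.left_commute of_nat_add)
qed


definition appell_seq :: "(nat \<Rightarrow> complex \<Rightarrow> complex) \<Rightarrow> bool" where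
  "appell_seq P \<longleftrightarrow> (\<forall>n x y. P n (x + y) = (\<Sum>i\<le>n. of_nat (n choose i) * P (n - i) x * y ^ i))"

lemma appell_seqD:
  "appell_seq P \<Longrightarrow> (\<Sum>i\<le>n. of_nat (n choose i) * P (n - i) x * y ^ i) = P n (x + y)"
  unfolding appell_seq_def by metis

lemma appell_seq_at_zero:
  assumes "appell_seq R"
  shows "R n y = (\<Sum>i\<le>n. of_nat (n choose i) * (R i 0 * y ^ (n - i)))"
proof -
  have "R n y = (\<Sum>i\<le>n. of_nat (n choose i) * R (n - i) 0 * y ^ i)"
    using appell_seqD[OF assms, of n 0 y] by simp
  also have "\<dots> = (\<Sum>i\<le>n. of_nat (n choose (n - i)) * (R (n - i) 0 * y ^ (n - (n - i))))"
    by (intro sum.cong refl) (auto simp flip: binomial_symmetric)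
  also have "\<dots> = (\<Sum>i\<le>n. of_nat (n choose i) * (R i 0 * y ^ (n - i)))"
    by (rule sum.reindex_bij_witness[where i="\<lambda>i. n - i" and j="\<lambda>i. n - i"]) auto
  finally show ?thesis .
qed

lemma appell_seq_at_add_bivariate:
  assumes "appell_seq R"
  shows "R (j1 + j2) y = (\<Sum>a1\<le>j1. of_nat (j1 choose a1) * y ^ (j1 - a1) *
             (\<Sum>a2\<le>j2. of_nat (j2 choose a2) * y ^ (j2 - a2) * R (a1 + a2) 0))"
proof -
  have "R (j1 + j2) y = (\<Sum>i\<le>j1 + j2. of_nat ((j1 + j2) choose i) * (R i 0 * y ^ (j1 + j2 - i)))"
    by (rule appell_seq_at_zero[OF assms])
  also have "\<dots> = (\<Sum>a1\<le>j1. of_nat (j1 choose a1) * (\<Sum>a2\<le>j2. of_nat (j2 choose a2) *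
        (R (a1 + a2) 0 * y ^ (j1 + j2 - (a1 + a2)))))"
    by (rule vandermonde_sum[symmetric])
  also have "\<dots> = (\<Sum>a1\<le>j1. of_nat (j1 choose a1) * y ^ (j1 - a1) *
             (\<Sum>a2\<le>j2. of_nat (j2 choose a2) * y ^ (j2 - a2) * R (a1 + a2) 0))"
    unfolding sum_distrib_left
  proof (intro sum.cong refl)
    fix a1 a2 assume "a1 \<in> {..j1}" "a2 \<in> {..j2}"
    then have "j1 + j2 - (a1 + a2) = (j1 - a1) + (j2 - a2)" by auto
    then show "of_nat (j1 choose a1) * (of_nat (j2 choose a2) * (R (a1 + a2) 0 * y ^ (j1 + j2 - (a1 + a2))))
      = of_nat (j1 choose a1) * y ^ (j1 - a1) * (of_nat (j2 choose a2) * y ^ (j2 - a2) * R (a1 + a2) 0)"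
      by (simp add: power_add ac_simps)
  qed
  finally show ?thesis .
qed

lemma appell_seq_convolution:
  assumes "appell_seq P"
  shows "(\<Sum>j\<le>p. of_nat (p choose j) * P (p - j) x * (\<Sum>a\<le>j. of_nat (j choose a) * y ^ (j - a) * g a))
       = (\<Sum>a\<le>p. of_nat (p choose a) * P (p - a) (x + y) * g a)"
proof -
  define G where
    "G a m = of_nat (p choose (a + m)) * P (p - (a + m)) x * (of_nat ((a + m) choose a) * y ^ m * g a)" for a m
  have "(\<Sum>j\<le>p. of_nat (p choose j) * P (p - j) x * (\<Sum>a\<le>j. of_nat (j choose a) * y ^ (j - a) * g a))
       = (\<Sum>j\<le>p. \<Sum>a\<le>j. G a (j - a))"
    unfolding sum_distrib_left G_def by (intro sum.cong refl) simp
  also have "\<dots> = (\<Sum>a\<le>p. \<Sum>m\<le>p - a. G a m)"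
    by (rule sum_triangle_swap)
  also have "\<dots> = (\<Sum>a\<le>p. of_nat (p choose a) * g a *
                    (\<Sum>m\<le>p - a. of_nat ((p - a) choose m) * P (p - a - m) x * y ^ m))"
    unfolding sum_distrib_left
  proof (intro sum.cong refl)
    fix a m assume "a \<in> {..p}" "m \<in> {..p - a}"
    then have "(of_nat (p choose (a + m)) * of_nat ((a + m) choose a) :: complex)
             = of_nat (p choose a) * of_nat ((p - a) choose m)"
      using choose_mult[of a "a + m" p] by (simp flip: of_nat_mult)
    moreover have "p - (a + m) = p - a - m" by simp
    ultimately show "G a m = of_nat (p choose a) * g a * (of_nat ((p - a) choose m) * P (p - a - m) x * y ^ m)"
      unfolding G_def by (metis (no_types, lifting) mult.assoc mult.commute mult.left_commute)
  qed
  also have "\<dots> = (\<Sum>a\<le>p. of_nat (p choose a) * P (p - a) (x + y) * g a)"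
    using assms unfolding appell_seq_def by (simp add: ac_simps)
  finally show ?thesis .
qed

lemma appell_seq_derivative:
  assumes "appell_seq P"
  shows "(\<Sum>j\<le>p. of_nat (p choose j) * P (p - j) x * (of_nat j * t ^ (j - 1)))
       = of_nat p * P (p - 1) (x + t)"
proof (cases p)
  case 0
  then show ?thesis by simp
next
  case (Suc q)
  have "(\<Sum>j\<le>p. of_nat (p choose j) * P (p - j) x * (of_nat j * t ^ (j - 1)))
      = (\<Sum>i\<le>q. of_nat (Suc q choose Suc i) * P (q - i) x * (of_nat (Suc i) * t ^ i))"
    unfolding Suc by (subst sum.atMost_Suc_shift) simp
  also have "\<dots> = (\<Sum>i\<le>q. of_nat (Suc q) * (of_nat (q choose i) * P (q - i) x * t ^ i))"
  proof (intro sum.cong refl)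
    fix i
    have "(of_nat (Suc q choose Suc i) * of_nat (Suc i) :: complex) = of_nat (Suc q) * of_nat (q choose i)"
      by (metis Suc_times_binomial_eq of_nat_mult)
    then show "of_nat (Suc q choose Suc i) * P (q - i) x * (of_nat (Suc i) * t ^ i)
       = of_nat (Suc q) * (of_nat (q choose i) * P (q - i) x * t ^ i)"
      by (metis (no_types, lifting) mult.assoc mult.commute mult.left_commute)
  qed
  also have "\<dots> = of_nat p * P (p - 1) (x + t)"
    by (simp add: Suc appell_seqD[OF assms] flip: sum_distrib_left)
  finally show ?thesis .
qed

lemma appell_seq_pair_shift:
  assumes P: "appell_seq P" and Q: "appell_seq Q" and R: "appell_seq R"
  shows "(\<Sum>j1\<le>p1. \<Sum>j2\<le>p2. of_nat (p1 choose j1) * of_nat (p2 choose j2) *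
            P (p1 - j1) x1 * Q (p2 - j2) x2 * R (j1 + j2) y)
       = (\<Sum>j1\<le>p1. \<Sum>j2\<le>p2. of_nat (p1 choose j1) * of_nat (p2 choose j2) *
            P (p1 - j1) (x1 + y) * Q (p2 - j2) (x2 + y) * R (j1 + j2) 0)"
proof -
  define g where "g j2 a1 = (\<Sum>a2\<le>j2. of_nat (j2 choose a2) * y ^ (j2 - a2) * R (a1 + a2) 0)" for j2 a1
  have "(\<Sum>j1\<le>p1. \<Sum>j2\<le>p2. of_nat (p1 choose j1) * of_nat (p2 choose j2) *
            P (p1 - j1) x1 * Q (p2 - j2) x2 * R (j1 + j2) y)
     = (\<Sum>j2\<le>p2. \<Sum>j1\<le>p1. of_nat (p2 choose j2) * Q (p2 - j2) x2 *
          (of_nat (p1 choose j1) * P (p1 - j1) x1 * (\<Sum>a1\<le>j1. of_nat (j1 choose a1) * y ^ (j1 - a1) * g j2 a1)))"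
    by (subst sum.swap, intro sum.cong refl, subst appell_seq_at_add_bivariate[OF R])
       (simp only: g_def ac_simps)
  also have "\<dots> = (\<Sum>j2\<le>p2. of_nat (p2 choose j2) * Q (p2 - j2) x2 *
          (\<Sum>a1\<le>p1. of_nat (p1 choose a1) * P (p1 - a1) (x1 + y) * g j2 a1))"
    by (simp only: sum_distrib_left[symmetric] appell_seq_convolution[OF P])
  also have "\<dots> = (\<Sum>j2\<le>p2. \<Sum>a1\<le>p1. of_nat (p1 choose a1) * P (p1 - a1) (x1 + y) *
          (of_nat (p2 choose j2) * Q (p2 - j2) x2 * g j2 a1))"
    by (simp only: sum_distrib_left ac_simps)
  also have "\<dots> = (\<Sum>a1\<le>p1. of_nat (p1 choose a1) * P (p1 - a1) (x1 + y) *
          (\<Sum>j2\<le>p2. of_nat (p2 choose j2) * Q (p2 - j2) x2 *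
             (\<Sum>a2\<le>j2. of_nat (j2 choose a2) * y ^ (j2 - a2) * R (a1 + a2) 0)))"
    by (subst sum.swap) (simp only: sum_distrib_left g_def)
  also have "\<dots> = (\<Sum>a1\<le>p1. of_nat (p1 choose a1) * P (p1 - a1) (x1 + y) *
          (\<Sum>a2\<le>p2. of_nat (p2 choose a2) * Q (p2 - a2) (x2 + y) * R (a1 + a2) 0))"
    by (simp only: appell_seq_convolution[OF Q])
  also have "\<dots> = (\<Sum>j1\<le>p1. \<Sum>j2\<le>p2. of_nat (p1 choose j1) * of_nat (p2 choose j2) *
            P (p1 - j1) (x1 + y) * Q (p2 - j2) (x2 + y) * R (j1 + j2) 0)"
    by (simp only: sum_distrib_left ac_simps)
  finally show ?thesis .
qed

lemma appell_seq_pair_derivative: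
  assumes P: "appell_seq P" and Q: "appell_seq Q"
  shows "(\<Sum>j1\<le>p1. \<Sum>j2\<le>p2. of_nat (p1 choose j1) * of_nat (p2 choose j2) *
            P (p1 - j1) x1 * Q (p2 - j2) x2 * (of_nat (j1 + j2) * t ^ (j1 + j2 - 1)))
       = of_nat p1 * P (p1 - 1) (x1 + t) * Q p2 (x2 + t) + of_nat p2 * P p1 (x1 + t) * Q (p2 - 1) (x2 + t)"
proof -
  let ?a = "\<lambda>j1. of_nat (p1 choose j1) * P (p1 - j1) x1" and ?b = "\<lambda>j2. of_nat (p2 choose j2) * Q (p2 - j2) x2"
  have product_rule: "of_nat (p1 choose j1) * of_nat (p2 choose j2) * P (p1 - j1) x1 * Q (p2 - j2) x2 *
      (of_nat (j1 + j2) * t ^ (j1 + j2 - 1))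
    = ?a j1 * (of_nat j1 * t ^ (j1 - 1)) * (?b j2 * t ^ j2) + ?a j1 * t ^ j1 * (?b j2 * (of_nat j2 * t ^ (j2 - 1)))"
    for j1 j2
    unfolding of_nat_add_mult_power_pred by (simp add: algebra_simps)
  have "(\<Sum>j1\<le>p1. \<Sum>j2\<le>p2. of_nat (p1 choose j1) * of_nat (p2 choose j2) *
            P (p1 - j1) x1 * Q (p2 - j2) x2 * (of_nat (j1 + j2) * t ^ (j1 + j2 - 1)))
      = (\<Sum>j1\<le>p1. ?a j1 * (of_nat j1 * t ^ (j1 - 1))) * (\<Sum>j2\<le>p2. ?b j2 * t ^ j2)
        + (\<Sum>j1\<le>p1. ?a j1 * t ^ j1) * (\<Sum>j2\<le>p2. ?b j2 * (of_nat j2 * t ^ (j2 - 1)))"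
    by (simp only: product_rule sum.distrib sum_product)
  also have "\<dots> = of_nat p1 * P (p1 - 1) (x1 + t) * Q p2 (x2 + t) + P p1 (x1 + t) * (of_nat p2 * Q (p2 - 1) (x2 + t))"
    by (simp only: appell_seq_derivative[OF P] appell_seq_derivative[OF Q] appell_seqD[OF P] appell_seqD[OF Q])
  finally show ?thesis
    by (simp only: ac_simps)
qed

lemma appell_seq_pair_shift_diff:
  assumes P: "appell_seq P" and Q: "appell_seq Q" and R: "appell_seq R"
  shows "(\<Sum>j1\<le>p1. \<Sum>j2\<le>p2. of_nat (p1 choose j1) * of_nat (p2 choose j2) *
            (P (p1 - j1) (x1 + y) * Q (p2 - j2) (x2 + y) - P (p1 - j1) x1 * Q (p2 - j2) x2) * R (j1 + j2) 0)
       = (\<Sum>j1\<le>p1. \<Sum>j2\<le>p2. of_nat (p1 choose j1) * of_nat (p2 choose j2) *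
            P (p1 - j1) x1 * Q (p2 - j2) x2 * (R (j1 + j2) y - R (j1 + j2) 0))"
  using appell_seq_pair_shift[OF P Q R, of p1 p2 x1 x2 y]
  by (simp add: algebra_simps sum_subtractf)


definition alt_binomial_pow_sum :: "nat \<Rightarrow> complex \<Rightarrow> nat \<Rightarrow> complex" where
  "alt_binomial_pow_sum l x m = (\<Sum>j\<le>l. of_nat (l choose j) * ((-1) ^ j * (of_nat j + x) ^ m))"

lemma power_add_one_diff:
  fixes z :: "'a::comm_ring_1"
  shows "(z + 1) ^ m - z ^ m = (\<Sum>i<m. of_nat (m choose i) * z ^ i)"
  using binomial_ring[of z 1 m] by (simp add: lessThan_Suc_atMost[symmetric])

text \<open>alt_binomial_pow_sum l x m is (-1)^l times the l-th forward difference of z^m at z = x.\<close>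
lemma alt_binomial_pow_sum_eq_0: "m < l \<Longrightarrow> alt_binomial_pow_sum l x m = 0"
proof (induction l arbitrary: x m)
  case 0
  then show ?case by simp
next
  case (Suc l)
  have "alt_binomial_pow_sum (Suc l) x m
      = alt_binomial_pow_sum l x m + (\<Sum>j\<le>l. of_nat (l choose j) * ((-1) ^ Suc j * (of_nat (Suc j) + x) ^ m))"
    unfolding alt_binomial_pow_sum_def by (rule sum_choose_Suc)
  also have "(\<Sum>j\<le>l. of_nat (l choose j) * ((-1) ^ Suc j * (of_nat (Suc j) + x) ^ m))
      = - alt_binomial_pow_sum l (x + 1) m"
    unfolding alt_binomial_pow_sum_def by (simp add: sum_negf[symmetric] add_ac)
  finally have "alt_binomial_pow_sum (Suc l) x m = - (alt_binomial_pow_sum l (x + 1) m - alt_binomial_pow_sum l x m)"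
    by simp
  also have "alt_binomial_pow_sum l (x + 1) m - alt_binomial_pow_sum l x m
      = (\<Sum>j\<le>l. of_nat (l choose j) * ((-1) ^ j * ((of_nat j + x + 1) ^ m - (of_nat j + x) ^ m)))"
    unfolding alt_binomial_pow_sum_def by (simp add: sum_subtractf[symmetric] algebra_simps)
  also have "\<dots> = (\<Sum>i<m. of_nat (m choose i) * alt_binomial_pow_sum l x i)"
    unfolding power_add_one_diff alt_binomial_pow_sum_def sum_distrib_left
    by (subst sum.swap) (simp add: ac_simps)
  also have "\<dots> = 0"
    using Suc by (intro sum.neutral) auto
  finally show ?case by simp
qed

lemma poly_bernpoly_eq_sum_atMost:
  assumes "n \<le> N"
  shows "poly_bernpoly k n x = (\<Sum>l\<le>N. 1 / of_nat (l + 1) powi k * alt_binomial_pow_sum l x n)"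
  using assms
proof (induction N rule: dec_induct)
  case base
  show ?case
    unfolding poly_bernpoly_def alt_binomial_pow_sum_def atLeast0AtMost
    by (intro sum.cong refl) (simp add: ac_simps)
next
  case (step N)
  then show ?case by (simp add: alt_binomial_pow_sum_eq_0)
qed

lemma appell_seq_poly_bernpoly: "appell_seq (poly_bernpoly k)"
  unfolding appell_seq_def
proof (intro allI)
  fix n and x y :: complex
  let ?c = "\<lambda>l. 1 / of_nat (l + 1) powi k :: complex"
  have binomial: "(of_nat j + (x + y)) ^ n = (\<Sum>i\<le>n. of_nat (n choose i) * y ^ i * (of_nat j + x) ^ (n - i))" for j
    using binomial_ring[of y "of_nat j + x" n] by (simp add: ac_simps)
  have "poly_bernpoly k n (x + y)
      = (\<Sum>l\<le>n. \<Sum>i\<le>n. \<Sum>j\<le>l. of_nat (n choose i) * y ^ i *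
           (?c l * (of_nat (l choose j) * ((-1) ^ j * (of_nat j + x) ^ (n - i)))))"
    unfolding poly_bernpoly_eq_sum_atMost[OF order_refl] alt_binomial_pow_sum_def binomial sum_distrib_left
    by (rule sum.cong[OF refl], subst sum.swap) (simp only: ac_simps)
  also have "\<dots> = (\<Sum>i\<le>n. of_nat (n choose i) * y ^ i * (\<Sum>l\<le>n. ?c l * alt_binomial_pow_sum l x (n - i)))"
    unfolding alt_binomial_pow_sum_def sum_distrib_left by (rule sum.swap)
  also have "\<dots> = (\<Sum>i\<le>n. of_nat (n choose i) * poly_bernpoly k (n - i) x * y ^ i)"
    by (intro sum.cong refl) (simp add: poly_bernpoly_eq_sum_atMost[of "n - _" n])
  finally show "poly_bernpoly k n (x + y) = (\<Sum>i\<le>n. of_nat (n choose i) * poly_bernpoly k (n - i) x * y ^ i)" .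
qed


definition bernpoly_fps :: "complex \<Rightarrow> complex fps" where
  "bernpoly_fps x = fps_X * fps_exp x / (fps_exp 1 - 1)"

lemma bernpoly_eq_fps_nth: "bernpoly n x = fact n * fps_nth (bernpoly_fps x) n"
  unfolding bernpoly_def bernpoly_fps_def ..

lemma subdegree_fps_exp_minus_one: "subdegree (fps_exp (1::complex) - 1) = 1"
  by (rule subdegreeI) auto

lemma subdegree_fps_X_times_fps_exp: "subdegree (fps_X * fps_exp (x::complex)) = 1"
proof -
  have "fps_nth (fps_exp x) 0 \<noteq> 0"
    by simp
  then have "fps_exp x \<noteq> 0"
    by auto
  moreover have "subdegree (fps_exp x) = 0"
    by (rule subdegreeI) auto
  ultimately show ?thesis by simp
qed

lemma bernpoly_fps_add: "bernpoly_fps (x + y) = bernpoly_fps x * fps_exp y"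
  unfolding bernpoly_fps_def fps_exp_add_mult mult.assoc[symmetric]
  by (rule fps_divide_times2) (unfold subdegree_fps_exp_minus_one subdegree_fps_X_times_fps_exp, simp)

lemma bernpoly_fps_add_one: "bernpoly_fps (x + 1) - bernpoly_fps x = fps_X * fps_exp x"
proof -
  have "fps_exp (1::complex) - 1 \<noteq> 0"
    using subdegree_fps_exp_minus_one by auto
  then have "bernpoly_fps x * (fps_exp 1 - 1) = fps_X * fps_exp x"
    unfolding bernpoly_fps_def
    by (intro fps_times_divide_eq) (unfold subdegree_fps_exp_minus_one subdegree_fps_X_times_fps_exp, simp_all)
  then show ?thesis
    unfolding bernpoly_fps_add[of x 1] by (simp add: algebra_simps)
qed

lemma appell_seq_bernpoly: "appell_seq bernpoly"
  unfolding appell_seq_def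
proof (intro allI)
  fix n x y
  have "bernpoly n (x + y) = fact n * (\<Sum>i=0..n. y ^ i / fact i * fps_nth (bernpoly_fps x) (n - i))"
    unfolding bernpoly_eq_fps_nth bernpoly_fps_add mult.commute[of "bernpoly_fps x"] fps_mult_nth by simp
  also have "\<dots> = (\<Sum>i\<le>n. of_nat (n choose i) * bernpoly (n - i) x * y ^ i)"
    unfolding sum_distrib_left atLeast0AtMost bernpoly_eq_fps_nth
    by (intro sum.cong refl) (simp add: binomial_fact field_simps)
  finally show "bernpoly n (x + y) = (\<Sum>i\<le>n. of_nat (n choose i) * bernpoly (n - i) x * y ^ i)" .
qed

lemma bernpoly_add_one: "bernpoly n (x + 1) - bernpoly n x = of_nat n * x ^ (n - 1)"
proof -
  have "bernpoly n (x + 1) - bernpoly n x = fact n * fps_nth (fps_X * fps_exp x) n"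
    unfolding bernpoly_eq_fps_nth right_diff_distrib[symmetric] fps_sub_nth[symmetric] bernpoly_fps_add_one ..
  also have "\<dots> = of_nat n * x ^ (n - 1)"
  proof (cases n)
    case (Suc m)
    have "fact (Suc m) * (x ^ m / fact m) = (of_nat (Suc m) :: complex) * x ^ m"
      by (simp add: fact_Suc del: of_nat_Suc)
    then show ?thesis using Suc by simp
  qed simp
  finally show ?thesis .
qed

lemma bernpoly_of_nat_minus_bernoulli_num:
  "bernpoly m (of_nat r) - bernoulli_num m = (\<Sum>t<r. of_nat m * of_nat t ^ (m - 1))"
proof -
  have "bernpoly m (of_nat r) - bernoulli_num m = (\<Sum>t<r. bernpoly m (of_nat (Suc t)) - bernpoly m (of_nat t))"
    using sum_lessThan_telescope[of "\<lambda>t. bernpoly m (of_nat t)" r] by (simp add: bernoulli_num_def)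
  also have "\<dots> = (\<Sum>t<r. of_nat m * of_nat t ^ (m - 1))"
    by (intro sum.cong refl) (metis bernpoly_add_one of_nat_Suc add.commute)
  finally show ?thesis .
qed

lemma appell_seq_pair_bernpoly_diff:
  assumes P: "appell_seq P" and Q: "appell_seq Q"
  shows "(\<Sum>j1\<le>p1. \<Sum>j2\<le>p2. of_nat (p1 choose j1) * of_nat (p2 choose j2) *
            P (p1 - j1) x1 * Q (p2 - j2) x2 * (bernpoly (j1 + j2) (of_nat r) - bernoulli_num (j1 + j2)))
       = of_nat p1 * (\<Sum>t<r. P (p1 - 1) (x1 + of_nat t) * Q p2 (x2 + of_nat t))
         + of_nat p2 * (\<Sum>t<r. P p1 (x1 + of_nat t) * Q (p2 - 1) (x2 + of_nat t))"
proof -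
  have "(\<Sum>j1\<le>p1. \<Sum>j2\<le>p2. of_nat (p1 choose j1) * of_nat (p2 choose j2) *
            P (p1 - j1) x1 * Q (p2 - j2) x2 * (bernpoly (j1 + j2) (of_nat r) - bernoulli_num (j1 + j2)))
      = (\<Sum>j1\<le>p1. \<Sum>t<r. \<Sum>j2\<le>p2. of_nat (p1 choose j1) * of_nat (p2 choose j2) *
            P (p1 - j1) x1 * Q (p2 - j2) x2 * (of_nat (j1 + j2) * of_nat t ^ (j1 + j2 - 1)))"
    unfolding bernpoly_of_nat_minus_bernoulli_num sum_distrib_left
    by (rule sum.cong[OF refl]) (rule sum.swap)
  also have "\<dots> = (\<Sum>t<r. \<Sum>j1\<le>p1. \<Sum>j2\<le>p2. of_nat (p1 choose j1) * of_nat (p2 choose j2) *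
            P (p1 - j1) x1 * Q (p2 - j2) x2 * (of_nat (j1 + j2) * of_nat t ^ (j1 + j2 - 1)))"
    by (rule sum.swap)
  also have "\<dots> = (\<Sum>t<r. of_nat p1 * P (p1 - 1) (x1 + of_nat t) * Q p2 (x2 + of_nat t)
                         + of_nat p2 * P p1 (x1 + of_nat t) * Q (p2 - 1) (x2 + of_nat t))"
    by (simp only: appell_seq_pair_derivative[OF P Q])
  finally show ?thesis
    by (simp add: sum.distrib sum_distrib_left mult.assoc)
qed

theorem mainTheorem13:
  fixes p1 p2 r :: nat and k1 k2 :: int and x1 x2 :: complex
  assumes "r > 0"
  shows "(\<Sum>j1=0..p1. \<Sum>j2=0..p2. of_nat (p1 choose j1) * of_nat (p2 choose j2) *
            (poly_bernpoly k1 (p1 - j1) (x1 + of_nat r) * poly_bernpoly k2 (p2 - j2) (x2 + of_nat r)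
             - poly_bernpoly k1 (p1 - j1) x1 * poly_bernpoly k2 (p2 - j2) x2) * bernoulli_num (j1 + j2))
       = (\<Sum>j1=0..p1. \<Sum>j2=0..p2. of_nat (p1 choose j1) * of_nat (p2 choose j2) *
            poly_bernpoly k1 (p1 - j1) x1 * poly_bernpoly k2 (p2 - j2) x2 *
            (bernpoly (j1 + j2) (of_nat r) - bernoulli_num (j1 + j2)))
     \<and> (\<Sum>j1=0..p1. \<Sum>j2=0..p2. of_nat (p1 choose j1) * of_nat (p2 choose j2) *
            poly_bernpoly k1 (p1 - j1) x1 * poly_bernpoly k2 (p2 - j2) x2 *
            (bernpoly (j1 + j2) (of_nat r) - bernoulli_num (j1 + j2)))
       = (if p1 = 0 then 0 else of_nat p1 * (\<Sum>t<r. poly_bernpoly k1 (p1 - 1) (x1 + of_nat t) * poly_bernpoly k2 p2 (x2 + of_nat t)))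
         + (if p2 = 0 then 0 else of_nat p2 * (\<Sum>t<r. poly_bernpoly k1 p1 (x1 + of_nat t) * poly_bernpoly k2 (p2 - 1) (x2 + of_nat t)))"
proof -
  have P: "appell_seq (poly_bernpoly k1)" and Q: "appell_seq (poly_bernpoly k2)"
    by (rule appell_seq_poly_bernpoly)+
  show ?thesis
    unfolding atLeast0AtMost
    using appell_seq_pair_shift_diff[OF P Q appell_seq_bernpoly, of p1 p2 x1 "of_nat r" x2]
      appell_seq_pair_bernpoly_diff[OF P Q, of p1 p2 x1 x2 r]
    by (simp add: bernoulli_num_def)
qed

end
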